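(* Let $n\ge 3$, $B\ge 1$, $G\ge B$, and let the labels $y_1,\dots,y_n\in[-G,G]$ be generated by an (possibly adaptive) adversary. Let $x_1,\dots,x_n$ be the predictions of FLH-OGD (defined in the context) with learning rate $\zeta=1/(2(G+B)^2)$. Then there exist a constant $c>0$ depending only on $G,B$ and an absolute constant $p\ge 0$ such that for every $C_n\ge 0$ and every comparator sequence $(w_1,\dots,w_n)\in\mathcal{TV}^B(C_n)$, $$\sum_{t=1}^n (y_t-x_t)^2-(y_t-w_t)^2\;\le\; c\,(\log n)^p\,\max\{n^{1/3}C_n^{2/3},\,1\}.$$ (The paper writes this as $\tilde O(n^{1/3}C_n^{2/3}\vee 1)$, with $\tilde O$ hiding logarithmic factors of $n,G,B$.) The algorithm does not need $C_n$ as input.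
   Context: Squared loss game: for $t=1,\dots,n$ the learner predicts $x_t\in[-B,B]$, then the adversary reveals $y_t\in[-G,G]$ and the learner suffers $(y_t-x_t)^2$. For integers $a\le b$ write $[a,b]=\{a,\dots,b\}$ and $[n]=[1,n]$. $\mathcal{TV}^B(C_n)=\{w_{1:n}: \sum_{t=2}^n|w_t-w_{t-1}|\le C_n,\ |w_t|\le B\ \forall t\}$. FLH-OGD: For each $j\in[n]$ a base learner $E^j$ is started at time $j$; it runs projected online gradient descent on $[-B,B]$ on the losses $x\mapsto (y_t-x)^2$, $t\ge j$: its first prediction $x^{(j)}_j$ is a fixed point of $[-B,B]$, and $x^{(j)}_{t+1}=\Pi\big(x^{(j)}_t-\tfrac{1}{2\tau}\cdot 2(x^{(j)}_t-y_t)\big)$ with $\tau=t-j+1$, where $\Pi$ is the projection onto $[-B,B]$. The FLH meta-algorithm with learning rate $\zeta$ keeps a probability vector $v_t=(v_t^{(1)},\dots,v_t^{(t)})$, $v_1=(1)$; at time $t$ it predicts $x_t=\sum_{j\le t}v_t^{(j)}x^{(j)}_t$; after $y_t$ is revealed it sets $\hat v^{(i)}_{t+1}=v_t^{(i)}e^{-\zeta(y_t-x_t^{(i)})^2}/\sum_{j\le t}v_t^{(j)}e^{-\zeta(y_t-x_t^{(j)})^2}$ for $i\le t$, then $v^{(t+1)}_{t+1}=1/(t+1)$ and $v^{(i)}_{t+1}=(1-\tfrac1{t+1})\hat v^{(i)}_{t+1}$ for $i\le t$. FLH-OGD is FLH with learning rate $\zeta=1/(2(G+B)^2)$ and these OGD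 base learners. *)

theory Defs
  imports "HOL-Analysis.Analysis"
begin

definition clip :: "real \<Rightarrow> real \<Rightarrow> real" where
  "clip B x = max (- B) (min B x)"

(* Base learner E^j (projected OGD started at time j with first prediction x0).
   ogd B x0 y j k is its prediction at time t = j + k; step size 1/(2 tau), tau = k+1 = t-j+1. *)
primrec ogd :: "real \<Rightarrow> real \<Rightarrow> (nat \<Rightarrow> real) \<Rightarrow> nat \<Rightarrow> nat \<Rightarrow> real" where
  "ogd B x0 y j 0 = x0"
| "ogd B x0 y j (Suc k) =
     clip B (ogd B x0 y j k - (1 / (2 * real (k + 1))) * (2 * (ogd B x0 y j k - y (j + k))))"

definition base_pred :: "real \<Rightarrow> real \<Rightarrow> (nat \<Rightarrow> real) \<Rightarrow> nat \<Rightarrow> nat \<Rightarrow> real" where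
  "base_pred B x0 y j t = ogd B x0 y j (t - j)"

(* FLH weight vector v_t (indices 1..t), learning rate zeta; time index starts at 1 *)
fun flh_v :: "real \<Rightarrow> real \<Rightarrow> real \<Rightarrow> (nat \<Rightarrow> real) \<Rightarrow> nat \<Rightarrow> nat \<Rightarrow> real" where
  "flh_v zeta B x0 y 0 = (\<lambda>i. 0)"
| "flh_v zeta B x0 y (Suc 0) = (\<lambda>i. if i = 1 then 1 else 0)"
| "flh_v zeta B x0 y (Suc (Suc s)) =
     (let t = Suc s;
          v = flh_v zeta B x0 y t;
          Z = (\<Sum>j = 1..t. v j * exp (- zeta * (y t - base_pred B x0 y j t)\<^sup>2))
      in (\<lambda>i. if 1 \<le> i \<and> i \<le> t
               then (1 - 1 / real (t + 1)) * (v i * exp (- zeta * (y t - base_pred B x0 y i t)\<^sup>2) / Z)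
               else if i = t + 1 then 1 / real (t + 1) else 0))"

definition flh_pred :: "real \<Rightarrow> real \<Rightarrow> real \<Rightarrow> (nat \<Rightarrow> real) \<Rightarrow> nat \<Rightarrow> real" where
  "flh_pred zeta B x0 y t = (\<Sum>j = 1..t. flh_v zeta B x0 y t j * base_pred B x0 y j t)"

definition flh_ogd :: "real \<Rightarrow> real \<Rightarrow> real \<Rightarrow> (nat \<Rightarrow> real) \<Rightarrow> nat \<Rightarrow> real" where
  "flh_ogd G B x0 y t = flh_pred (1 / (2 * (G + B)\<^sup>2)) B x0 y t"

definition TV :: "real \<Rightarrow> nat \<Rightarrow> real \<Rightarrow> (nat \<Rightarrow> real) set" where
  "TV B n C = {w. (\<Sum>t = 2..n. \<bar>w t - w (t - 1)\<bar>) \<le> C \<and> (\<forall>t\<in>{1..n}. \<bar>w t\<bar> \<le> B)}"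

end

theory Submission
  imports Defs
begin

text \<open>FLH-OGD has logarithmic adaptive regret: on every interval \<open>[r, s]\<close> it is within
  \<open>L = O(log n)\<close> of every constant comparator, since the meta algorithm loses only
  \<open>O(log n) / \<zeta>\<close> against the OGD learner started at \<open>r\<close> (the square loss is exp-concave) and
  that learner, with step sizes \<open>1 / (2 \<tau>)\<close>, loses only \<open>O(log n)\<close> against any constant. Hence
  the regret against a piecewise constant comparator with \<open>k\<close> changes is at most \<open>(k + 1) L\<close>.

  A comparator \<open>w\<close> of total variation \<open>C\<close> is first replaced by the minimizer \<open>w'\<close> of the squared
  loss plus \<open>\<lambda> = 2 L / h\<close> times the total variation, and \<open>w'\<close> by a quantization \<open>q\<close> at
  resolution \<open>h\<close>. First-order optimality of \<open>w'\<close> in the direction \<open>w' - q\<close> makes the extra loss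
  of \<open>q\<close> quadratic in \<open>h\<close>, namely at most \<open>n h\<^sup>2 + \<lambda> (TV w' - TV q)\<close>, while \<open>q\<close> changes at
  most \<open>2 TV q / h + 1\<close> times, so the penalty pays for the changes of \<open>q\<close>. What remains is
  \<open>O(L (1 + C / h) + n h\<^sup>2)\<close>, and \<open>h = (C / n)\<^bsup>1/3\<^esup>\<close> gives the bound.\<close>

section \<open>Online gradient descent\<close>

lemma abs_clip_le: "0 \<le> B \<Longrightarrow> \<bar>clip B x\<bar> \<le> B"
  by (auto simp: clip_def)

lemma clip_dist_le: "\<bar>u\<bar> \<le> B \<Longrightarrow> \<bar>clip B a - u\<bar> \<le> \<bar>a - u\<bar>"
  by (auto simp: clip_def)

lemma abs_ogd_le: "\<bar>x0\<bar> \<le> B \<Longrightarrow> 0 \<le> B \<Longrightarrow> \<bar>ogd B x0 y j k\<bar> \<le> B"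
  by (cases k) (auto simp: abs_clip_le)

lemma abs_base_pred_le: "\<bar>x0\<bar> \<le> B \<Longrightarrow> 0 \<le> B \<Longrightarrow> \<bar>base_pred B x0 y j t\<bar> \<le> B"
  by (simp add: base_pred_def abs_ogd_le)

text \<open>Since \<open>(y - x)\<^sup>2 - (y - u)\<^sup>2 = 2 (x - y) (x - u) - (x - u)\<^sup>2\<close>, a gradient step of size
  \<open>1 / (k + 1)\<close> turns the instantaneous regret into a telescoping difference of the potentials
  \<open>k (x\<^sub>k - u)\<^sup>2\<close> plus a term of order \<open>1 / (k + 1)\<close>.\<close>

lemma ogd_step_regret:
  fixes x y u G B :: real and k :: nat
  assumes "\<bar>u\<bar> \<le> B" "\<bar>x\<bar> \<le> B" "\<bar>y\<bar> \<le> G"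
  defines "x' \<equiv> clip B (x - (1 / (2 * real (k + 1))) * (2 * (x - y)))"
  shows "(y - x)\<^sup>2 - (y - u)\<^sup>2
           \<le> real k * (x - u)\<^sup>2 - real (k + 1) * (x' - u)\<^sup>2 + (G + B)\<^sup>2 / real (k + 1)"
proof -
  define T where "T = real (k + 1)"
  define a where "a = x - (x - y) / T"
  have T: "T > 0" by (simp add: T_def)
  have "(1 / (2 * real (k + 1))) * (2 * (x - y)) = (x - y) / T"
    by (simp add: T_def field_simps)
  then have "x' = clip B a"
    unfolding x'_def a_def by simp
  then have "(x' - u)\<^sup>2 \<le> (a - u)\<^sup>2"
    using clip_dist_le[OF assms(1)] by (simp add: abs_le_square_iff)
  then have x'_le: "T * (x' - u)\<^sup>2 \<le> T * (a - u)\<^sup>2"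
    using T by simp
  have a_sq: "T * (a - u)\<^sup>2 = T * (x - u)\<^sup>2 - 2 * (x - y) * (x - u) + (x - y)\<^sup>2 / T"
    using T unfolding a_def by (simp add: field_simps power2_eq_square)
  have "(x - y)\<^sup>2 \<le> (G + B)\<^sup>2"
    using assms by (subst power2_le_iff_abs_le) linarith+
  then have "(x - y)\<^sup>2 / T \<le> (G + B)\<^sup>2 / T"
    using T by (simp add: divide_right_mono)
  moreover have "(y - x)\<^sup>2 - (y - u)\<^sup>2 = 2 * (x - y) * (x - u) - (x - u)\<^sup>2"
    by (simp add: power2_eq_square algebra_simps)
  ultimately show ?thesis
    using x'_le a_sq unfolding T_def by (simp add: algebra_simps)
qed

lemma ogd_regret_le_harm:
  assumes "\<bar>x0\<bar> \<le> B" "\<bar>u\<bar> \<le> B" "\<forall>k<m. \<bar>y (j + k)\<bar> \<le> G"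
  shows "(\<Sum>k<m. (y (j + k) - ogd B x0 y j k)\<^sup>2 - (y (j + k) - u)\<^sup>2)
           \<le> (G + B)\<^sup>2 * harm m - real m * (ogd B x0 y j m - u)\<^sup>2"
  using assms(3)
proof (induction m)
  case 0
  then show ?case by (simp add: harm_def)
next
  case (Suc m)
  have "0 \<le> B" using assms(2) by linarith
  then have "(y (j + m) - ogd B x0 y j m)\<^sup>2 - (y (j + m) - u)\<^sup>2
      \<le> real m * (ogd B x0 y j m - u)\<^sup>2 - real (m + 1) * (ogd B x0 y j (Suc m) - u)\<^sup>2
         + (G + B)\<^sup>2 / real (m + 1)"
    using ogd_step_regret[OF assms(2) abs_ogd_le[OF assms(1)], where y = "y (j + m)" and G = G and k = m] Suc.prems
    by simp
  moreover have "harm (Suc m) = harm m + 1 / real (m + 1)"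
    by (simp add: harm_Suc field_simps)
  ultimately show ?case
    using Suc by (simp add: algebra_simps)
qed

lemma ogd_regret_le_ln:
  assumes "\<bar>x0\<bar> \<le> B" "\<bar>u\<bar> \<le> B" "\<forall>k<m. \<bar>y (j + k)\<bar> \<le> G" "1 \<le> m"
  shows "(\<Sum>k<m. (y (j + k) - ogd B x0 y j k)\<^sup>2 - (y (j + k) - u)\<^sup>2) \<le> (G + B)\<^sup>2 * (ln (real m) + 1)"
proof -
  have "0 \<le> real m * (ogd B x0 y j m - u)\<^sup>2"
    by simp
  then have "(\<Sum>k<m. (y (j + k) - ogd B x0 y j k)\<^sup>2 - (y (j + k) - u)\<^sup>2) \<le> (G + B)\<^sup>2 * harm m"
    using ogd_regret_le_harm[OF assms(1-3)] by linarith
  also have "harm m \<le> ln (real m) + 1"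
    using euler_mascheroni_sequence_decreasing[of 1 m] assms(4) by (simp add: harm_def)
  finally show ?thesis
    by (simp add: mult_left_mono)
qed

section \<open>Follow the leading history\<close>

lemma flh_v_Suc:
  assumes "1 \<le> t"
  shows "flh_v \<zeta> B x0 y (Suc t) i =
    (if 1 \<le> i \<and> i \<le> t then (1 - 1 / real (t + 1)) *
       (flh_v \<zeta> B x0 y t i * exp (- \<zeta> * (y t - base_pred B x0 y i t)\<^sup>2) /
        (\<Sum>j = 1..t. flh_v \<zeta> B x0 y t j * exp (- \<zeta> * (y t - base_pred B x0 y j t)\<^sup>2)))
     else if i = t + 1 then 1 / real (t + 1) else 0)"
proof -
  obtain s where "t = Suc s" using assms by (cases t) auto
  then show ?thesis by (simp add: Let_def)
qed

lemma flh_v_distribution: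
  assumes "1 \<le> t"
  shows "(\<forall>i\<in>{1..t}. 0 < flh_v \<zeta> B x0 y t i) \<and> (\<Sum>i = 1..t. flh_v \<zeta> B x0 y t i) = 1"
  using assms
proof (induction t rule: dec_induct)
  case base
  then show ?case by simp
next
  case (step t)
  define v where "v = flh_v \<zeta> B x0 y t"
  define e where "e j = exp (- \<zeta> * (y t - base_pred B x0 y j t)\<^sup>2)" for j
  define Z where "Z = (\<Sum>j = 1..t. v j * e j)"
  have v_pos: "\<forall>i\<in>{1..t}. 0 < v i" and v_sum: "sum v {1..t} = 1"
    using step.IH by (simp_all add: v_def)
  have Z_pos: "Z > 0"
    unfolding Z_def using v_pos step.hyps(1) by (intro sum_pos) (auto simp: e_def)
  have v_Suc: "flh_v \<zeta> B x0 y (Suc t) i = (if 1 \<le> i \<and> i \<le> t then (1 - 1 / real (t + 1)) *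
      (v i * e i / Z) else if i = t + 1 then 1 / real (t + 1) else 0)" for i
    using flh_v_Suc[OF step.hyps(1)] unfolding v_def e_def Z_def by simp
  have "0 < 1 - 1 / real (t + 1)"
    using step.hyps(1) by (simp add: field_simps)
  then have pos: "\<forall>i\<in>{1..Suc t}. 0 < flh_v \<zeta> B x0 y (Suc t) i"
    using v_pos Z_pos by (auto simp: v_Suc e_def le_Suc_eq)
  have "(\<Sum>i = 1..t. flh_v \<zeta> B x0 y (Suc t) i) = (\<Sum>i = 1..t. (1 - 1 / real (t + 1)) * (v i * e i / Z))"
    by (rule sum.cong) (auto simp: v_Suc)
  also have "\<dots> = 1 - 1 / real (t + 1)"
    using Z_pos by (simp add: sum_distrib_left[symmetric] sum_divide_distrib[symmetric] Z_def)
  finally have "(\<Sum>i = 1..Suc t. flh_v \<zeta> B x0 y (Suc t) i) = 1"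
    using v_Suc[of "Suc t"] by simp
  with pos show ?case by blast
qed

lemma flh_v_self:
  assumes "1 \<le> t"
  shows "flh_v \<zeta> B x0 y t t = 1 / real t"
proof (cases "t = 1")
  case False
  then obtain s where "t = Suc s" "1 \<le> s"
    using assms by (cases t) auto
  then show ?thesis by (simp add: flh_v_Suc)
qed simp

lemma flh_v_le_1:
  assumes "i \<in> {1..t}"
  shows "flh_v \<zeta> B x0 y t i \<le> 1"
proof -
  have t: "1 \<le> t" using assms by simp
  note v = flh_v_distribution[OF t, of \<zeta> B x0 y]
  have "flh_v \<zeta> B x0 y t i \<le> (\<Sum>i = 1..t. flh_v \<zeta> B x0 y t i)"
    using v assms by (intro member_le_sum) (auto intro: less_imp_le)
  with v show ?thesis by simp
qed

text \<open>Exp-concavity of the square loss: \<open>x \<mapsto> exp (- \<zeta> (yy - x)\<^sup>2)\<close> is concave wherever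
  \<open>2 \<zeta> (yy - x)\<^sup>2 \<le> 1\<close>.\<close>

lemma exp_sq_loss_mixture_le:
  fixes a z :: "nat \<Rightarrow> real"
  assumes "finite S" "S \<noteq> {}" "\<forall>j\<in>S. 0 \<le> a j" "sum a S = 1" "\<forall>j\<in>S. \<bar>z j\<bar> \<le> B"
    and "\<bar>yy\<bar> \<le> G" "0 < \<zeta>" "2 * \<zeta> * (G + B)\<^sup>2 \<le> 1"
  shows "(\<Sum>j\<in>S. a j * exp (- \<zeta> * (yy - z j)\<^sup>2)) \<le> exp (- \<zeta> * (yy - (\<Sum>j\<in>S. a j * z j))\<^sup>2)"
proof -
  define f where "f x = - exp (- \<zeta> * (yy - x)\<^sup>2)" for x
  define f' where "f' x = - (2 * \<zeta> * (yy - x) * exp (- \<zeta> * (yy - x)\<^sup>2))" for x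
  define f'' where "f'' x = 2 * \<zeta> * exp (- \<zeta> * (yy - x)\<^sup>2) * (1 - 2 * \<zeta> * (yy - x)\<^sup>2)" for x
  have f': "DERIV f x :> f' x" for x
    unfolding f_def f'_def by (auto intro!: derivative_eq_intros simp: power2_eq_square algebra_simps)
  have f'': "DERIV f' x :> f'' x" for x
    unfolding f'_def f''_def by (auto intro!: derivative_eq_intros simp: power2_eq_square algebra_simps)
  have "f'' x \<ge> 0" if "x \<in> {-B..B}" for x
  proof -
    have "(yy - x)\<^sup>2 \<le> (G + B)\<^sup>2"
      using that assms(6) by (subst power2_le_iff_abs_le) auto
    then have "2 * \<zeta> * (yy - x)\<^sup>2 \<le> 1"
      using assms(7,8) by (smt (verit) mult_left_mono)
    then show ?thesis
      unfolding f''_def using assms(7) by simp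
  qed
  then have "convex_on {-B..B} f"
    by (intro f''_ge0_imp_convex[OF convex_real_interval(5) f' f''])
  then have "f (\<Sum>j\<in>S. a j *\<^sub>R z j) \<le> (\<Sum>j\<in>S. a j * f (z j))"
    using assms(3,5) by (intro convex_on_sum[OF assms(1,2) _ assms(4)]) (auto simp: abs_le_iff)
  then show ?thesis
    unfolding f_def by (simp add: sum_negf)
qed

text \<open>The weight \<open>ln v\<^sub>t(r)\<close> of expert \<open>r\<close> is the potential: one step of the meta algorithm
  raises it by the scaled regret against \<open>r\<close>, up to the cost \<open>ln (t + 1) - ln t\<close> of
  the fixed share given to the newcomer.\<close>

lemma flh_step_regret:
  assumes "r \<in> {1..t}" "\<bar>y t\<bar> \<le> G" "\<bar>x0\<bar> \<le> B" "0 < \<zeta>" "2 * \<zeta> * (G + B)\<^sup>2 \<le> 1"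
  shows "\<zeta> * ((y t - flh_pred \<zeta> B x0 y t)\<^sup>2 - (y t - base_pred B x0 y r t)\<^sup>2)
     \<le> (ln (flh_v \<zeta> B x0 y (Suc t) r) - ln (flh_v \<zeta> B x0 y t r)) + (ln (real (Suc t)) - ln (real t))"
proof -
  have t: "1 \<le> t" using assms by simp
  have B: "0 \<le> B" using assms(3) by linarith
  define v where "v = flh_v \<zeta> B x0 y t"
  define e where "e j = exp (- \<zeta> * (y t - base_pred B x0 y j t)\<^sup>2)" for j
  define Z where "Z = (\<Sum>j = 1..t. v j * e j)"
  define P where "P = flh_pred \<zeta> B x0 y t"
  have v_pos: "\<forall>j\<in>{1..t}. 0 < v j" and v_sum: "sum v {1..t} = 1"
    using flh_v_distribution[OF t] by (simp_all add: v_def)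
  have Z_pos: "Z > 0"
    unfolding Z_def using v_pos t by (intro sum_pos) (auto simp: e_def)
  have "Z \<le> exp (- \<zeta> * (y t - P)\<^sup>2)"
    unfolding Z_def e_def P_def flh_pred_def v_def[symmetric]
    using t v_pos v_sum assms abs_base_pred_le[OF assms(3) B]
    by (intro exp_sq_loss_mixture_le) (auto intro: less_imp_le)
  then have ln_Z: "ln Z \<le> - \<zeta> * (y t - P)\<^sup>2"
    using Z_pos by (metis ln_exp ln_le_cancel_iff exp_gt_zero)
  have "flh_v \<zeta> B x0 y (Suc t) r = real t / real (Suc t) * (v r * e r / Z)"
    using flh_v_Suc[OF t, of \<zeta> B x0 y r] assms t unfolding v_def e_def Z_def
    by (simp add: field_simps)
  moreover have "v r > 0"
    using v_pos assms(1) by blast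
  ultimately have "ln (flh_v \<zeta> B x0 y (Suc t) r) = ln (real t) - ln (real (Suc t)) + ln (v r) + ln (e r) - ln Z"
    using Z_pos t by (simp add: ln_mult ln_div e_def)
  then show ?thesis
    using ln_Z unfolding v_def P_def e_def by (simp add: algebra_simps)
qed

lemma flh_regret_le_base_pred:
  assumes "1 \<le> r" "r \<le> s" "\<forall>t\<in>{r..s}. \<bar>y t\<bar> \<le> G" "\<bar>x0\<bar> \<le> B" "0 < \<zeta>" "2 * \<zeta> * (G + B)\<^sup>2 \<le> 1"
  shows "(\<Sum>t = r..s. (y t - flh_pred \<zeta> B x0 y t)\<^sup>2 - (y t - base_pred B x0 y r t)\<^sup>2) \<le> ln (real s + 1) / \<zeta>"
proof -
  define L where "L t = ln (flh_v \<zeta> B x0 y t r)" for t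
  define l where "l t = ln (real t)" for t
  have "\<zeta> * (\<Sum>t = r..s. (y t - flh_pred \<zeta> B x0 y t)\<^sup>2 - (y t - base_pred B x0 y r t)\<^sup>2)
      = (\<Sum>t = r..s. \<zeta> * ((y t - flh_pred \<zeta> B x0 y t)\<^sup>2 - (y t - base_pred B x0 y r t)\<^sup>2))"
    by (simp add: sum_distrib_left)
  also have "\<dots> \<le> (\<Sum>t = r..s. (L (Suc t) - L t) + (l (Suc t) - l t))"
    unfolding L_def l_def using assms by (intro sum_mono flh_step_regret) auto
  also have "\<dots> = (L (Suc s) - L r) + (l (Suc s) - l r)"
    using assms by (simp add: sum.distrib sum_Suc_diff)
  also have "L (Suc s) \<le> 0"
    using flh_v_distribution[of "Suc s" \<zeta> B x0 y] flh_v_le_1[of r "Suc s"] assms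
    by (simp add: L_def)
  also have "L r = - l r"
    using flh_v_self[of r \<zeta> B x0 y] assms by (simp add: L_def l_def ln_div)
  finally have "\<zeta> * (\<Sum>t = r..s. (y t - flh_pred \<zeta> B x0 y t)\<^sup>2 - (y t - base_pred B x0 y r t)\<^sup>2)
      \<le> ln (real s + 1)"
    by (simp add: l_def add.commute)
  then show ?thesis
    using assms(5) by (simp add: field_simps mult.commute)
qed

lemma abs_flh_pred_le:
  assumes "1 \<le> t" "\<bar>x0\<bar> \<le> B"
  shows "\<bar>flh_pred \<zeta> B x0 y t\<bar> \<le> B"
proof -
  note v = flh_v_distribution[OF assms(1), of \<zeta> B x0 y]
  have "\<bar>flh_pred \<zeta> B x0 y t\<bar> \<le> (\<Sum>j = 1..t. \<bar>flh_v \<zeta> B x0 y t j * base_pred B x0 y j t\<bar>)"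
    unfolding flh_pred_def by (rule sum_abs)
  also have "\<dots> \<le> (\<Sum>j = 1..t. flh_v \<zeta> B x0 y t j * B)"
  proof (intro sum_mono)
    fix j assume "j \<in> {1..t}"
    then have "0 < flh_v \<zeta> B x0 y t j"
      using v by blast
    moreover have "\<bar>base_pred B x0 y j t\<bar> \<le> B"
      using assms(2) by (intro abs_base_pred_le) auto
    ultimately show "\<bar>flh_v \<zeta> B x0 y t j * base_pred B x0 y j t\<bar> \<le> flh_v \<zeta> B x0 y t j * B"
      by (simp add: abs_mult mult_left_mono)
  qed
  also have "\<dots> = B"
    using v by (simp add: sum_distrib_right[symmetric])
  finally show ?thesis .
qed

section \<open>Adaptive regret of FLH-OGD\<close>

definition adaptive_bound :: "real \<Rightarrow> real \<Rightarrow> nat \<Rightarrow> real" where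
  "adaptive_bound G B n = (G + B)\<^sup>2 * (2 * ln (real n + 1) + ln (real n) + 1)"

lemma adaptive_bound_nonneg: "1 \<le> n \<Longrightarrow> 0 \<le> adaptive_bound G B n"
  unfolding adaptive_bound_def by (intro mult_nonneg_nonneg add_nonneg_nonneg) auto

lemma flh_ogd_interval_regret:
  assumes "1 \<le> r" "r \<le> s" "s \<le> n" "\<forall>t\<in>{1..n}. \<bar>y t\<bar> \<le> G" "\<bar>x0\<bar> \<le> B" "\<bar>u\<bar> \<le> B" "0 < G + B"
  shows "(\<Sum>t = r..s. (y t - flh_ogd G B x0 y t)\<^sup>2 - (y t - u)\<^sup>2) \<le> adaptive_bound G B n"
proof -
  define \<zeta> where "\<zeta> = 1 / (2 * (G + B)\<^sup>2)"
  have \<zeta>: "0 < \<zeta>" "2 * \<zeta> * (G + B)\<^sup>2 \<le> 1"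
    using assms(7) by (simp_all add: \<zeta>_def)
  have "(\<Sum>t = r..s. (y t - flh_pred \<zeta> B x0 y t)\<^sup>2 - (y t - base_pred B x0 y r t)\<^sup>2)
      \<le> ln (real s + 1) / \<zeta>"
    using assms \<zeta> by (intro flh_regret_le_base_pred) auto
  also have "\<dots> = 2 * (G + B)\<^sup>2 * ln (real s + 1)"
    by (simp add: \<zeta>_def)
  also have "\<dots> \<le> 2 * (G + B)\<^sup>2 * ln (real n + 1)"
    using assms(3) by (intro mult_left_mono) auto
  finally have meta: "(\<Sum>t = r..s. (y t - flh_ogd G B x0 y t)\<^sup>2 - (y t - base_pred B x0 y r t)\<^sup>2)
      \<le> 2 * (G + B)\<^sup>2 * ln (real n + 1)"
    by (simp add: flh_ogd_def \<zeta>_def)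
  have "(\<Sum>t = r..s. (y t - base_pred B x0 y r t)\<^sup>2 - (y t - u)\<^sup>2)
      = (\<Sum>k<Suc (s - r). (y (r + k) - ogd B x0 y r k)\<^sup>2 - (y (r + k) - u)\<^sup>2)"
    using assms(2) by (simp add: sum.atLeastAtMost_shift_0 lessThan_Suc_atMost atLeast0AtMost base_pred_def)
  also have "\<dots> \<le> (G + B)\<^sup>2 * (ln (real (Suc (s - r))) + 1)"
    using assms by (intro ogd_regret_le_ln) auto
  also have "\<dots> \<le> (G + B)\<^sup>2 * (ln (real n) + 1)"
    using assms by (intro mult_left_mono) auto
  finally have base: "(\<Sum>t = r..s. (y t - base_pred B x0 y r t)\<^sup>2 - (y t - u)\<^sup>2)
      \<le> (G + B)\<^sup>2 * (ln (real n) + 1)" .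
  have "(\<Sum>t = r..s. (y t - flh_ogd G B x0 y t)\<^sup>2 - (y t - u)\<^sup>2)
      = (\<Sum>t = r..s. (y t - flh_ogd G B x0 y t)\<^sup>2 - (y t - base_pred B x0 y r t)\<^sup>2)
        + (\<Sum>t = r..s. (y t - base_pred B x0 y r t)\<^sup>2 - (y t - u)\<^sup>2)"
    by (simp add: sum_subtractf)
  with meta base show ?thesis
    unfolding adaptive_bound_def by (simp add: algebra_simps)
qed

definition num_changes :: "(nat \<Rightarrow> real) \<Rightarrow> nat \<Rightarrow> real" where
  "num_changes p n = (\<Sum>t = 2..n. of_bool (p t \<noteq> p (t - 1)))"

lemma num_changes_Suc: "1 \<le> n \<Longrightarrow> num_changes p (Suc n) = num_changes p n + of_bool (p (Suc n) \<noteq> p n)"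
  unfolding num_changes_def by (subst sum.cl_ivl_Suc) auto

lemma sum_le_by_constant_blocks:
  fixes f :: "nat \<Rightarrow> real \<Rightarrow> real"
  assumes "1 \<le> n"
    and block: "\<And>r s. 1 \<le> r \<Longrightarrow> r \<le> s \<Longrightarrow> s \<le> n \<Longrightarrow> (\<Sum>t = r..s. f t (p s)) \<le> L"
  shows "(\<Sum>t = 1..n. f t (p t)) \<le> L * (1 + num_changes p n)"
proof -
  have blocks: "\<exists>r\<in>{1..s}. (\<Sum>t = 1..s. f t (p t)) \<le> L * num_changes p s + (\<Sum>t = r..s. f t (p s))"
    if "1 \<le> s" "s \<le> n" for s
    using that
  proof (induction s rule: dec_induct)
    case base
    then show ?case
      by (intro bexI[of _ 1]) (auto simp: num_changes_def)
  next
    case (step s)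
    then obtain r where r: "r \<in> {1..s}"
      and IH: "(\<Sum>t = 1..s. f t (p t)) \<le> L * num_changes p s + (\<Sum>t = r..s. f t (p s))"
      by auto
    show ?case
    proof (cases "p (Suc s) = p s")
      case True
      then have "(\<Sum>t = 1..Suc s. f t (p t))
          \<le> L * num_changes p (Suc s) + (\<Sum>t = r..Suc s. f t (p (Suc s)))"
        using IH r step.hyps(1) by (simp add: num_changes_Suc)
      then show ?thesis
        using r by (intro bexI[of _ r]) auto
    next
      case False
      have "(\<Sum>t = r..s. f t (p s)) \<le> L"
        using r step.prems by (intro block) auto
      then have "(\<Sum>t = 1..Suc s. f t (p t))
          \<le> L * num_changes p (Suc s) + (\<Sum>t = Suc s..Suc s. f t (p (Suc s)))"
        using IH False step.hyps(1) by (simp add: num_changes_Suc algebra_simps)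
      then show ?thesis
        by (intro bexI[of _ "Suc s"]) auto
    qed
  qed
  obtain r where "r \<in> {1..n}"
    and "(\<Sum>t = 1..n. f t (p t)) \<le> L * num_changes p n + (\<Sum>t = r..n. f t (p n))"
    using blocks[OF assms(1) order_refl] by blast
  moreover have "(\<Sum>t = r..n. f t (p n)) \<le> L"
    using \<open>r \<in> {1..n}\<close> by (intro block) auto
  ultimately show ?thesis
    by (simp add: distrib_left)
qed

lemma flh_ogd_piecewise_constant_regret:
  assumes "1 \<le> n" "\<forall>t\<in>{1..n}. \<bar>y t\<bar> \<le> G" "\<bar>x0\<bar> \<le> B" "0 < G + B" "\<forall>t\<in>{1..n}. \<bar>p t\<bar> \<le> B"
  shows "(\<Sum>t = 1..n. (y t - flh_ogd G B x0 y t)\<^sup>2 - (y t - p t)\<^sup>2)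
           \<le> adaptive_bound G B n * (1 + num_changes p n)"
  using assms(1)
proof (rule sum_le_by_constant_blocks[where f = "\<lambda>t u. (y t - flh_ogd G B x0 y t)\<^sup>2 - (y t - u)\<^sup>2"])
  fix r s assume "1 \<le> r" "r \<le> s" "s \<le> n"
  then show "(\<Sum>t = r..s. (y t - flh_ogd G B x0 y t)\<^sup>2 - (y t - p s)\<^sup>2) \<le> adaptive_bound G B n"
    using assms by (intro flh_ogd_interval_regret) auto
qed

section \<open>Quantizing a bounded comparator\<close>

definition total_variation :: "nat \<Rightarrow> (nat \<Rightarrow> real) \<Rightarrow> real" where
  "total_variation n v = (\<Sum>t = 2..n. \<bar>v t - v (t - 1)\<bar>)"

lemma total_variation_cong:
  assumes "\<And>t. t \<in> {1..n} \<Longrightarrow> u t = v t"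
  shows "total_variation n u = total_variation n v"
  unfolding total_variation_def
proof (intro sum.cong refl)
  fix t assume "t \<in> {2..n}"
  then have "t \<in> {1..n}" "t - 1 \<in> {1..n}"
    by auto
  then have "u t = v t" "u (t - 1) = v (t - 1)"
    using assms by blast+
  then show "\<bar>u t - u (t - 1)\<bar> = \<bar>v t - v (t - 1)\<bar>"
    by simp
qed

text \<open>The quantized sequence follows \<open>w\<close> lazily, jumping to \<open>w t\<close> only when \<open>w\<close> has moved
  more than \<open>h\<close> away or has reached the boundary \<open>\<plusminus>B\<close>; the second rule keeps it equal to
  \<open>w\<close> wherever \<open>w\<close> sits on the boundary.\<close>

primrec quantize :: "real \<Rightarrow> real \<Rightarrow> (nat \<Rightarrow> real) \<Rightarrow> nat \<Rightarrow> real" where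
  "quantize B h w 0 = w 1"
| "quantize B h w (Suc t) =
     (if h < \<bar>w (Suc t) - quantize B h w t\<bar> \<or> (\<bar>w (Suc t)\<bar> = B \<and> w (Suc t) \<noteq> quantize B h w t)
      then w (Suc t) else quantize B h w t)"

lemma quantize_invariant:
  assumes "0 < h" "\<forall>t\<in>{1..n}. \<bar>w t\<bar> \<le> B" "t \<in> {1..n}"
  shows "\<bar>w t - quantize B h w t\<bar> \<le> h \<and> \<bar>quantize B h w t\<bar> \<le> B
           \<and> (\<bar>w t\<bar> = B \<longrightarrow> quantize B h w t = w t)"
proof -
  have "1 \<le> t" "t \<le> n" using assms(3) by auto
  then show ?thesis
  proof (induction t rule: dec_induct)
    case base
    then show ?case using assms by simp
  next
    case (step s)
    then show ?case
      using assms(1,2) by (auto simp del: quantize.simps simp: quantize.simps(2) split: if_split)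
  qed
qed

lemma quantize_jump:
  assumes "0 < h" "\<forall>t\<in>{1..n}. \<bar>w t\<bar> \<le> B" "1 \<le> s" "Suc s \<le> n"
    and jump: "quantize B h w (Suc s) \<noteq> quantize B h w s"
  shows "quantize B h w (Suc s) = w (Suc s)"
    and "0 < (quantize B h w (Suc s) - quantize B h w s) * (w (Suc s) - w s)"
proof -
  define q where "q = quantize B h w"
  have moved: "h < \<bar>w (Suc s) - q s\<bar> \<or> (\<bar>w (Suc s)\<bar> = B \<and> w (Suc s) \<noteq> q s)"
    using jump unfolding q_def by (auto split: if_splits)
  then show q_Suc: "quantize B h w (Suc s) = w (Suc s)"
    unfolding q_def by simp
  have inv: "\<bar>w s - q s\<bar> \<le> h" "\<bar>q s\<bar> \<le> B" "\<bar>w s\<bar> = B \<longrightarrow> q s = w s"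
    using quantize_invariant[OF assms(1,2), of s] assms(3,4) unfolding q_def by auto
  have "\<bar>w (Suc s)\<bar> \<le> B" "\<bar>w s\<bar> \<le> B"
    using assms(2-4) by auto
  text \<open>Either \<open>w\<close> left the \<open>h\<close>-neighbourhood of \<open>q s\<close>, which contains \<open>w s\<close>, or it moved onto the
    boundary from strictly inside; in both cases \<open>w\<close> and \<open>q\<close> move in the same direction.\<close>
  then have "0 < (w (Suc s) - q s) * (w (Suc s) - w s)"
    using moved inv by (cases "0 < w (Suc s) - q s") (auto simp: zero_less_mult_iff abs_if split: if_splits)
  then show "0 < (quantize B h w (Suc s) - quantize B h w s) * (w (Suc s) - w s)"
    using q_Suc unfolding q_def by simp
qed

text \<open>A jump of size at most \<open>h\<close> lands on the boundary from strictly inside, so such small jumps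
  alternate with the large ones, each of which contributes more than \<open>h\<close> to the total variation.\<close>

lemma quantize_num_changes_le:
  assumes "0 < h" "h < 2 * B" "\<forall>t\<in>{1..n}. \<bar>w t\<bar> \<le> B" "1 \<le> n"
  shows "h * num_changes (quantize B h w) n \<le> 2 * total_variation n (quantize B h w) + h"
proof -
  define q where "q = quantize B h w"
  define on_boundary :: "real \<Rightarrow> real" where "on_boundary x = of_bool (\<bar>x\<bar> = B)" for x
  have "h * num_changes q s + h * on_boundary (q 1) \<le> 2 * total_variation s q + h * on_boundary (q s)"
    if "1 \<le> s" "s \<le> n" for s
    using that
  proof (induction s rule: dec_induct)
    case base
    then show ?case by (simp add: num_changes_def total_variation_def)
  next
    case (step s)
    have tv_Suc: "total_variation (Suc s) q = total_variation s q + \<bar>q (Suc s) - q s\<bar>"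
      unfolding total_variation_def using step.hyps(1) by (subst sum.cl_ivl_Suc) auto
    have "h * of_bool (q (Suc s) \<noteq> q s) + h * on_boundary (q s)
        \<le> 2 * \<bar>q (Suc s) - q s\<bar> + h * on_boundary (q (Suc s))"
    proof (cases "q (Suc s) = q s")
      case False
      show ?thesis
      proof (cases "h < \<bar>q (Suc s) - q s\<bar>")
        case True
        have "h * on_boundary (q s) \<le> h" "0 \<le> h * on_boundary (q (Suc s))"
          using assms(1) by (simp_all add: on_boundary_def)
        then show ?thesis
          using True False by simp
      next
        case small: False
        then have "\<bar>q (Suc s)\<bar> = B"
          using False unfolding q_def by (auto split: if_splits)
        moreover have "\<bar>q s\<bar> \<noteq> B"
          using calculation False small assms(2) by (auto simp: abs_if split: if_splits)
        ultimately show ?thesis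
          using False by (simp add: on_boundary_def)
      qed
    qed simp
    then show ?case
      using step.IH step.prems tv_Suc step.hyps(1) by (simp add: num_changes_Suc algebra_simps)
  qed
  moreover have "h * on_boundary (q n) \<le> h" "0 \<le> h * on_boundary (q 1)"
    using assms(1) by (simp_all add: on_boundary_def)
  ultimately show ?thesis
    using assms(4) unfolding q_def by fastforce
qed

section \<open>First-order optimality of the penalized offline comparator\<close>

text \<open>Values outside \<open>1..n\<close> are irrelevant for the loss; bounding them as well makes the set of
  comparators a compact product of intervals.\<close>

definition comparator_box :: "real \<Rightarrow> (nat \<Rightarrow> real) set" where
  "comparator_box B = Pi\<^sub>E UNIV (\<lambda>_. {-B..B})"

definition penalized_loss :: "(nat \<Rightarrow> real) \<Rightarrow> nat \<Rightarrow> real \<Rightarrow> (nat \<Rightarrow> real) \<Rightarrow> real" where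
  "penalized_loss y n lam v = (\<Sum>t = 1..n. (y t - v t)\<^sup>2) + lam * total_variation n v"

lemma mem_comparator_box: "v \<in> comparator_box B \<longleftrightarrow> (\<forall>t. \<bar>v t\<bar> \<le> B)"
  by (auto simp: comparator_box_def PiE_UNIV_domain Pi_iff abs_le_iff minus_le_iff)

lemma penalized_minimizer_exists:
  assumes "0 \<le> B"
  shows "\<exists>w\<in>comparator_box B. \<forall>v\<in>comparator_box B. penalized_loss y n lam w \<le> penalized_loss y n lam v"
proof (rule continuous_attains_inf)
  have "compactin (product_topology (\<lambda>_. euclidean) UNIV) (comparator_box B)"
    unfolding comparator_box_def by (simp add: compactin_PiE)
  then show "compact (comparator_box B)"
    by (simp add: euclidean_product_topology)
  have "(\<lambda>_. 0) \<in> comparator_box B"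
    using assms by (simp add: mem_comparator_box)
  then show "comparator_box B \<noteq> {}"
    by blast
  have coordinate: "continuous_on (comparator_box B) (\<lambda>v. v t)" for t
    by (rule continuous_on_subset[OF continuous_on_product_coordinates]) simp
  show "continuous_on (comparator_box B) (penalized_loss y n lam)"
    unfolding penalized_loss_def total_variation_def by (intro continuous_intros coordinate)
qed

lemma abs_extrapolate_le:
  fixes a b s :: real
  assumes "0 < a * b" "0 \<le> s" "s * \<bar>b\<bar> \<le> \<bar>a\<bar>"
  shows "\<bar>(1 + s) * a - s * b\<bar> \<le> (1 + s) * \<bar>a\<bar> - s * \<bar>b\<bar>"
proof (cases "0 < a")
  case True
  then have "0 < b" "0 \<le> s * a"
    using assms(1,2) by (simp_all add: zero_less_mult_iff)
  then show ?thesis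
    using True assms(3) by (simp add: algebra_simps)
next
  case False
  then have "a < 0" "b < 0"
    using assms(1) by (auto simp: zero_less_mult_iff)
  moreover have "s * a \<le> 0"
    using calculation assms(2) by (simp add: mult_nonneg_nonpos)
  ultimately show ?thesis
    using assms(3) by (simp add: algebra_simps)
qed

lemma eventually_perturbation_in_comparator_box:
  assumes "w \<in> comparator_box B" "finite S" "\<And>t. t \<notin> S \<Longrightarrow> d t = 0"
    and "\<And>t. t \<in> S \<Longrightarrow> \<bar>w t\<bar> = B \<Longrightarrow> d t = 0"
  shows "\<forall>\<^sub>F s in at_right 0. (\<lambda>t. w t + s * d t) \<in> comparator_box B"
proof -
  have w_le: "\<bar>w t\<bar> \<le> B" for t
    using assms(1) by (simp add: mem_comparator_box)
  have "\<forall>\<^sub>F s in at_right 0. \<forall>t\<in>S. \<bar>w t + s * d t\<bar> \<le> B"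
  proof (intro eventually_ball_finite[OF assms(2)] ballI)
    fix t assume t: "t \<in> S"
    show "\<forall>\<^sub>F s in at_right 0. \<bar>w t + s * d t\<bar> \<le> B"
    proof (cases "\<bar>w t\<bar> = B")
      case True
      then show ?thesis
        using assms(4)[OF t] by simp
    next
      case False
      then have "\<bar>w t\<bar> < B"
        using w_le[of t] by simp
      moreover have "((\<lambda>s. \<bar>w t + s * d t\<bar>) \<longlongrightarrow> \<bar>w t\<bar>) (at_right 0)"
        by (auto intro!: tendsto_eq_intros)
      ultimately have "\<forall>\<^sub>F s in at_right 0. \<bar>w t + s * d t\<bar> < B"
        by (intro order_tendstoD(2))
      then show ?thesis
        by eventually_elim simp
    qed
  qed
  then show ?thesis
  proof eventually_elim
    case (elim s)
    have "\<bar>w t + s * d t\<bar> \<le> B" for t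
      using elim w_le[of t] assms(3)[of t] by (cases "t \<in> S") auto
    then show ?case
      by (simp add: mem_comparator_box)
  qed
qed

lemma eventually_total_variation_extrapolation_le:
  assumes "\<forall>t\<in>{2..n}. q t \<noteq> q (t - 1) \<longrightarrow> 0 < (q t - q (t - 1)) * (w t - w (t - 1))"
  shows "\<forall>\<^sub>F s in at_right 0. total_variation n (\<lambda>t. w t + s * (w t - q t))
           \<le> (1 + s) * total_variation n w - s * total_variation n q"
proof -
  have "\<forall>\<^sub>F s in at_right 0. \<forall>t\<in>{2..n}. \<bar>(1 + s) * (w t - w (t - 1)) - s * (q t - q (t - 1))\<bar>
          \<le> (1 + s) * \<bar>w t - w (t - 1)\<bar> - s * \<bar>q t - q (t - 1)\<bar>"
  proof (intro eventually_ball_finite ballI)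
    fix t assume t: "t \<in> {2..n}"
    define a where "a = w t - w (t - 1)"
    define b where "b = q t - q (t - 1)"
    have "\<forall>\<^sub>F s in at_right 0. \<bar>(1 + s) * a - s * b\<bar> \<le> (1 + s) * \<bar>a\<bar> - s * \<bar>b\<bar>"
    proof (cases "b = 0")
      case True
      show ?thesis
        using eventually_at_right_less[of 0]
        by eventually_elim (simp add: True abs_mult)
    next
      case False
      then have ab: "0 < a * b"
        using assms t by (simp add: a_def b_def mult.commute)
      then have "\<bar>a\<bar> > 0"
        by auto
      moreover have "((\<lambda>s. s * \<bar>b\<bar>) \<longlongrightarrow> 0) (at_right 0)"
        by (auto intro!: tendsto_eq_intros)
      ultimately have "\<forall>\<^sub>F s in at_right 0. s * \<bar>b\<bar> < \<bar>a\<bar>"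
        by (intro order_tendstoD(2))
      then show ?thesis
        using eventually_at_right_less[of 0]
        by eventually_elim (intro abs_extrapolate_le[OF ab]; simp)
    qed
    then show "\<forall>\<^sub>F s in at_right 0. \<bar>(1 + s) * (w t - w (t - 1)) - s * (q t - q (t - 1))\<bar>
          \<le> (1 + s) * \<bar>w t - w (t - 1)\<bar> - s * \<bar>q t - q (t - 1)\<bar>"
      by (simp add: a_def b_def)
  qed simp
  then show ?thesis
  proof eventually_elim
    case (elim s)
    have "total_variation n (\<lambda>t. w t + s * (w t - q t))
        = (\<Sum>t = 2..n. \<bar>(1 + s) * (w t - w (t - 1)) - s * (q t - q (t - 1))\<bar>)"
      unfolding total_variation_def by (intro sum.cong) (auto simp: algebra_simps)
    also have "\<dots> \<le> (\<Sum>t = 2..n. (1 + s) * \<bar>w t - w (t - 1)\<bar> - s * \<bar>q t - q (t - 1)\<bar>)"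
      using elim by (intro sum_mono) blast
    also have "\<dots> = (1 + s) * total_variation n w - s * total_variation n q"
      by (simp add: total_variation_def sum_subtractf sum_distrib_left)
    finally show ?case .
  qed
qed

text \<open>Moving the minimizer \<open>w\<close> away from \<open>q\<close>, to \<open>w + s (w - q)\<close>, stays admissible for small
  \<open>s > 0\<close> because \<open>q\<close> agrees with \<open>w\<close> on the boundary, and it changes the total variation by
  at most \<open>s (TV w - TV q)\<close> because every jump of \<open>q\<close> goes in the direction of the corresponding
  jump of \<open>w\<close>. Minimality then makes the derivative in this direction nonnegative.\<close>

lemma penalized_minimizer_first_order:
  fixes y w q :: "nat \<Rightarrow> real"
  assumes w_box: "w \<in> comparator_box B"
    and w_min: "\<forall>v\<in>comparator_box B. penalized_loss y n lam w \<le> penalized_loss y n lam v"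
    and "0 \<le> lam"
    and boundary: "\<forall>t\<in>{1..n}. \<bar>w t\<bar> = B \<longrightarrow> q t = w t"
    and jumps: "\<forall>t\<in>{2..n}. q t \<noteq> q (t - 1) \<longrightarrow> 0 < (q t - q (t - 1)) * (w t - w (t - 1))"
  shows "2 * (\<Sum>t = 1..n. (y t - w t) * (w t - q t)) \<le> lam * (total_variation n w - total_variation n q)"
proof -
  define d where "d t = (if t \<in> {1..n} then w t - q t else 0)" for t
  define v where "v s t = w t + s * d t" for s t
  define X where "X = (\<Sum>t = 1..n. (y t - w t) * (w t - q t))"
  define D where "D = (\<Sum>t = 1..n. (d t)\<^sup>2)"
  define K where "K = lam * (total_variation n w - total_variation n q)"
  have in_box: "\<forall>\<^sub>F s in at_right 0. v s \<in> comparator_box B"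
    unfolding v_def using boundary
    by (intro eventually_perturbation_in_comparator_box[OF w_box finite_atLeastAtMost]) (auto simp: d_def)
  have "total_variation n (v s) = total_variation n (\<lambda>t. w t + s * (w t - q t))" for s
    by (intro total_variation_cong) (simp add: v_def d_def)
  then have tv: "\<forall>\<^sub>F s in at_right 0. total_variation n (v s)
      \<le> (1 + s) * total_variation n w - s * total_variation n q"
    using eventually_total_variation_extrapolation_le[OF jumps] by simp
  have "\<forall>\<^sub>F s in at_right 0. 2 * X \<le> s * D + K"
    using in_box tv eventually_at_right_less[of 0]
  proof eventually_elim
    case (elim s)
    have "(\<Sum>t = 1..n. (y t - v s t)\<^sup>2) - (\<Sum>t = 1..n. (y t - w t)\<^sup>2)
        = (\<Sum>t = 1..n. s\<^sup>2 * (d t)\<^sup>2 - 2 * s * ((y t - w t) * (w t - q t)))"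
      unfolding sum_subtractf[symmetric]
      by (intro sum.cong) (auto simp: v_def d_def power2_eq_square algebra_simps)
    also have "\<dots> = s\<^sup>2 * D - 2 * s * X"
      by (simp add: D_def X_def sum_subtractf sum_distrib_left)
    finally have loss: "(\<Sum>t = 1..n. (y t - v s t)\<^sup>2) - (\<Sum>t = 1..n. (y t - w t)\<^sup>2)
        = s\<^sup>2 * D - 2 * s * X" .
    have "lam * total_variation n (v s)
        \<le> lam * ((1 + s) * total_variation n w - s * total_variation n q)"
      using elim(2) \<open>0 \<le> lam\<close> by (rule mult_left_mono)
    then have penalty: "lam * total_variation n (v s) - lam * total_variation n w \<le> s * K"
      by (simp add: K_def algebra_simps)
    have "penalized_loss y n lam w \<le> penalized_loss y n lam (v s)"
      using w_min elim(1) by blast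
    then have "0 \<le> s * (s * D - 2 * X + K)"
      using loss penalty unfolding penalized_loss_def by (simp add: power2_eq_square algebra_simps)
    then show ?case
      using elim(3) by (simp add: zero_le_mult_iff)
  qed
  moreover have "((\<lambda>s. s * D + K) \<longlongrightarrow> K) (at_right 0)"
    by (auto intro!: tendsto_eq_intros)
  ultimately have "2 * X \<le> K"
    by (intro tendsto_lowerbound) auto
  then show ?thesis
    by (simp add: X_def K_def)
qed

section \<open>Regret against comparators of bounded total variation\<close>

lemma penalized_minimizer_sq_loss_le:
  assumes w'_box: "w' \<in> comparator_box B"
    and w'_min: "\<forall>v\<in>comparator_box B. penalized_loss y n lam w' \<le> penalized_loss y n lam v"
    and "0 \<le> lam" "w \<in> TV B n C"
  shows "(\<Sum>t = 1..n. (y t - w' t)\<^sup>2) - (\<Sum>t = 1..n. (y t - w t)\<^sup>2) \<le> lam * C - lam * total_variation n w'"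
proof -
  have w_le: "\<forall>t\<in>{1..n}. \<bar>w t\<bar> \<le> B" and "total_variation n w \<le> C"
    using assms(4) by (simp_all add: TV_def total_variation_def)
  have "0 \<le> B"
    using w'_box by (auto simp: mem_comparator_box intro: order_trans[OF abs_ge_zero])
  define w\<^sub>0 where "w\<^sub>0 t = (if t \<in> {1..n} then w t else 0)" for t
  have "w\<^sub>0 \<in> comparator_box B"
    using w_le \<open>0 \<le> B\<close> by (auto simp: mem_comparator_box w\<^sub>0_def)
  then have "penalized_loss y n lam w' \<le> penalized_loss y n lam w\<^sub>0"
    using w'_min by blast
  also have "\<dots> = (\<Sum>t = 1..n. (y t - w t)\<^sup>2) + lam * total_variation n w"
    using total_variation_cong[of n w\<^sub>0 w] unfolding penalized_loss_def by (simp add: w\<^sub>0_def)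
  finally have "penalized_loss y n lam w' \<le> (\<Sum>t = 1..n. (y t - w t)\<^sup>2) + lam * total_variation n w" .
  moreover have "lam * total_variation n w \<le> lam * C"
    using \<open>total_variation n w \<le> C\<close> \<open>0 \<le> lam\<close> by (rule mult_left_mono)
  ultimately show ?thesis
    unfolding penalized_loss_def by linarith
qed

lemma quantized_penalized_minimizer_sq_loss_le:
  assumes w_box: "w \<in> comparator_box B"
    and w_min: "\<forall>v\<in>comparator_box B. penalized_loss y n lam w \<le> penalized_loss y n lam v"
    and "0 \<le> lam" "0 < h"
  shows "(\<Sum>t = 1..n. (y t - quantize B h w t)\<^sup>2) - (\<Sum>t = 1..n. (y t - w t)\<^sup>2)
           \<le> real n * h\<^sup>2 + lam * (total_variation n w - total_variation n (quantize B h w))"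
proof -
  define q where "q = quantize B h w"
  have w_le: "\<forall>t\<in>{1..n}. \<bar>w t\<bar> \<le> B"
    using w_box by (simp add: mem_comparator_box)
  note inv = quantize_invariant[OF \<open>0 < h\<close> w_le]
  have jumps: "\<forall>t\<in>{2..n}. q t \<noteq> q (t - 1) \<longrightarrow> 0 < (q t - q (t - 1)) * (w t - w (t - 1))"
  proof (intro ballI impI)
    fix t assume "t \<in> {2..n}" "q t \<noteq> q (t - 1)"
    moreover from this have "Suc (t - 1) = t"
      by simp
    ultimately show "0 < (q t - q (t - 1)) * (w t - w (t - 1))"
      using quantize_jump(2)[OF \<open>0 < h\<close> w_le, of "t - 1"] unfolding q_def by fastforce
  qed
  have "(\<Sum>t = 1..n. (y t - q t)\<^sup>2) - (\<Sum>t = 1..n. (y t - w t)\<^sup>2)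
      = (\<Sum>t = 1..n. (w t - q t)\<^sup>2 + 2 * ((y t - w t) * (w t - q t)))"
    unfolding sum_subtractf[symmetric] by (intro sum.cong) (simp_all add: power2_eq_square algebra_simps)
  also have "\<dots> = (\<Sum>t = 1..n. (w t - q t)\<^sup>2) + 2 * (\<Sum>t = 1..n. (y t - w t) * (w t - q t))"
    by (simp add: sum.distrib sum_distrib_left)
  also have "(\<Sum>t = 1..n. (w t - q t)\<^sup>2) \<le> (\<Sum>t = 1..n. h\<^sup>2)"
    using inv \<open>0 < h\<close> unfolding q_def by (intro sum_mono) (simp add: power2_le_iff_abs_le)
  also have "2 * (\<Sum>t = 1..n. (y t - w t) * (w t - q t)) \<le> lam * (total_variation n w - total_variation n q)"
    using inv jumps unfolding q_def
    by (intro penalized_minimizer_first_order[OF w_box w_min \<open>0 \<le> lam\<close>]) auto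
  finally show ?thesis
    by (simp add: q_def)
qed

lemma flh_ogd_regret_le_resolution:
  assumes "1 \<le> n" "\<forall>t\<in>{1..n}. \<bar>y t\<bar> \<le> G" "\<bar>x0\<bar> \<le> B" "w \<in> TV B n C" "0 < h" "h < 2 * B"
  shows "(\<Sum>t = 1..n. (y t - flh_ogd G B x0 y t)\<^sup>2 - (y t - w t)\<^sup>2)
           \<le> 2 * adaptive_bound G B n + real n * h\<^sup>2 + 2 * adaptive_bound G B n * C / h"
proof -
  define L where "L = adaptive_bound G B n"
  define lam where "lam = 2 * L / h"
  have "0 \<le> L" "0 \<le> lam"
    using adaptive_bound_nonneg[OF assms(1)] \<open>0 < h\<close> by (simp_all add: L_def lam_def)
  have "0 \<le> G"
    using assms(1,2) by fastforce
  then have "0 < G + B"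
    using assms(5,6) by simp
  obtain w' where w'_box: "w' \<in> comparator_box B"
    and w'_min: "\<forall>v\<in>comparator_box B. penalized_loss y n lam w' \<le> penalized_loss y n lam v"
    using penalized_minimizer_exists[of B y n lam] assms(5,6) by auto
  define q where "q = quantize B h w'"
  have w'_loss: "(\<Sum>t = 1..n. (y t - w' t)\<^sup>2) - (\<Sum>t = 1..n. (y t - w t)\<^sup>2)
      \<le> lam * C - lam * total_variation n w'"
    using w'_box w'_min \<open>0 \<le> lam\<close> assms(4) by (rule penalized_minimizer_sq_loss_le)
  have w'_le: "\<forall>t\<in>{1..n}. \<bar>w' t\<bar> \<le> B"
    using w'_box by (simp add: mem_comparator_box)
  have "(\<Sum>t = 1..n. (y t - flh_ogd G B x0 y t)\<^sup>2 - (y t - q t)\<^sup>2) \<le> L * (1 + num_changes q n)"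
    using quantize_invariant[OF assms(5) w'_le] assms(1-3) \<open>0 < G + B\<close> unfolding L_def q_def
    by (intro flh_ogd_piecewise_constant_regret) auto
  moreover have "L * num_changes q n \<le> lam * total_variation n q + L"
  proof -
    have "h * num_changes q n \<le> 2 * total_variation n q + h"
      unfolding q_def using assms(1,5,6) w'_le by (intro quantize_num_changes_le)
    then have "L * (h * num_changes q n) \<le> L * (2 * total_variation n q + h)"
      using \<open>0 \<le> L\<close> by (rule mult_left_mono)
    then show ?thesis
      using \<open>0 < h\<close> by (simp add: lam_def field_simps)
  qed
  ultimately have q_regret: "(\<Sum>t = 1..n. (y t - flh_ogd G B x0 y t)\<^sup>2 - (y t - q t)\<^sup>2)
      \<le> 2 * L + lam * total_variation n q"
    by (simp add: algebra_simps)
  have q_loss: "(\<Sum>t = 1..n. (y t - q t)\<^sup>2) - (\<Sum>t = 1..n. (y t - w' t)\<^sup>2)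
      \<le> real n * h\<^sup>2 + lam * (total_variation n w' - total_variation n q)"
    unfolding q_def using w'_box w'_min \<open>0 \<le> lam\<close> \<open>0 < h\<close>
    by (rule quantized_penalized_minimizer_sq_loss_le)
  have "(\<Sum>t = 1..n. (y t - flh_ogd G B x0 y t)\<^sup>2 - (y t - w t)\<^sup>2)
      = (\<Sum>t = 1..n. (y t - flh_ogd G B x0 y t)\<^sup>2 - (y t - q t)\<^sup>2)
        + ((\<Sum>t = 1..n. (y t - q t)\<^sup>2) - (\<Sum>t = 1..n. (y t - w' t)\<^sup>2))
        + ((\<Sum>t = 1..n. (y t - w' t)\<^sup>2) - (\<Sum>t = 1..n. (y t - w t)\<^sup>2))"
    by (simp add: sum_subtractf)
  moreover have "lam * C = 2 * L * C / h"
    by (simp add: lam_def)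
  ultimately show ?thesis
    using q_regret q_loss w'_loss unfolding L_def by (simp add: algebra_simps)
qed

lemma flh_ogd_regret_le_trivial:
  assumes "1 \<le> n" "\<forall>t\<in>{1..n}. \<bar>y t\<bar> \<le> G" "\<bar>x0\<bar> \<le> B"
  shows "(\<Sum>t = 1..n. (y t - flh_ogd G B x0 y t)\<^sup>2 - (y t - w t)\<^sup>2) \<le> (G + B)\<^sup>2 * real n"
proof -
  have "(y t - flh_ogd G B x0 y t)\<^sup>2 - (y t - w t)\<^sup>2 \<le> (G + B)\<^sup>2" if "t \<in> {1..n}" for t
  proof -
    have "\<bar>flh_ogd G B x0 y t\<bar> \<le> B"
      unfolding flh_ogd_def using that assms(3) by (intro abs_flh_pred_le) auto
    moreover have "\<bar>y t\<bar> \<le> G"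
      using that assms(2) by blast
    ultimately have "(y t - flh_ogd G B x0 y t)\<^sup>2 \<le> (G + B)\<^sup>2"
      using abs_triangle_ineq4[of "y t" "flh_ogd G B x0 y t"] by (subst power2_le_iff_abs_le) auto
    then show ?thesis
      by (smt (verit) zero_le_power2)
  qed
  then have "(\<Sum>t = 1..n. (y t - flh_ogd G B x0 y t)\<^sup>2 - (y t - w t)\<^sup>2) \<le> (\<Sum>t = 1..n. (G + B)\<^sup>2)"
    by (rule sum_mono)
  then show ?thesis
    by (simp add: mult.commute)
qed

lemma cube_root_tradeoff:
  fixes n c :: real
  assumes "0 < n" "0 < c"
  shows "n * ((c / n) powr (1/3))\<^sup>2 = n powr (1/3) * c powr (2/3)"
    and "c / (c / n) powr (1/3) = n powr (1/3) * c powr (2/3)"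
proof -
  have n: "n = n powr (1/3) * n powr (2/3)" and c: "c = c powr (1/3) * c powr (2/3)"
    using assms by (simp_all flip: powr_add)
  have sq: "(x powr (1/3))\<^sup>2 = x powr (2/3)" if "0 < x" for x :: real
    using that by (simp add: power2_eq_square flip: powr_add)
  have "((c / n) powr (1/3))\<^sup>2 = c powr (2/3) / n powr (2/3)"
    using assms by (simp add: powr_divide power_divide sq)
  then show "n * ((c / n) powr (1/3))\<^sup>2 = n powr (1/3) * c powr (2/3)"
    using assms by (subst (1) n) simp
  show "c / (c / n) powr (1/3) = n powr (1/3) * c powr (2/3)"
    using assms by (subst (1) c) (simp add: powr_divide)
qed

lemma one_le_ln_nat:
  assumes "3 \<le> n"
  shows "1 \<le> ln (real n)"
proof -
  have "(3::real) \<le> real n"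
    using assms by simp
  then have "exp 1 \<le> real n"
    using exp_le by linarith
  then show ?thesis
    using assms by (simp add: ln_ge_iff)
qed

lemma adaptive_bound_le_ln:
  assumes "3 \<le> n"
  shows "adaptive_bound G B n \<le> 6 * (G + B)\<^sup>2 * ln (real n)"
proof -
  have n: "3 \<le> real n"
    using assms by simp
  then have "3 * real n \<le> real n * real n"
    by (intro mult_right_mono) auto
  then have "real n + 1 \<le> real n * real n"
    using n by linarith
  then have "ln (real n + 1) \<le> ln (real n * real n)"
    using n by (subst ln_le_cancel_iff) auto
  then have "ln (real n + 1) \<le> 2 * ln (real n)"
    using n by (simp add: ln_mult)
  then have "2 * ln (real n + 1) + ln (real n) + 1 \<le> 6 * ln (real n)"
    using one_le_ln_nat[OF assms] by linarith
  then have "(G + B)\<^sup>2 * (2 * ln (real n + 1) + ln (real n) + 1) \<le> (G + B)\<^sup>2 * (6 * ln (real n))"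
    by (rule mult_left_mono) simp
  then show ?thesis
    by (simp add: adaptive_bound_def ac_simps)
qed

text \<open>The resolution \<open>h = (C / n)\<^bsup>1/3\<^esup>\<close> balances the last two terms of
  \<open>flh_ogd_regret_le_resolution\<close>; \<open>C\<close> is raised to \<open>1 / n\<close> to keep \<open>h\<close> positive.\<close>

lemma flh_ogd_regret_le_tuned_resolution:
  assumes "1 \<le> n" "\<forall>t\<in>{1..n}. \<bar>y t\<bar> \<le> G" "1 \<le> B" "\<bar>x0\<bar> \<le> B" "w \<in> TV B n C" "C < real n"
  shows "(\<Sum>t = 1..n. (y t - flh_ogd G B x0 y t)\<^sup>2 - (y t - w t)\<^sup>2)
           \<le> (1 + 4 * adaptive_bound G B n) * max (real n powr (1/3) * C powr (2/3)) 1"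
proof -
  define R where "R = max (real n powr (1/3) * C powr (2/3)) 1"
  define L where "L = adaptive_bound G B n"
  define c where "c = max C (1 / real n)"
  define h where "h = (c / real n) powr (1/3)"
  define M where "M = real n powr (1/3) * c powr (2/3)"
  have n: "1 \<le> real n"
    using assms(1) by simp
  have "1 / real n \<le> real n"
    using n by (simp add: order.trans[of _ 1])
  then have c: "0 < c" "c \<le> real n" "C \<le> c"
    using assms(6) n by (auto simp: c_def less_max_iff_disj)
  then have "0 < h" "h \<le> 1"
    using n by (simp_all add: h_def powr_le1)
  have "n * h\<^sup>2 = M" "c / h = M"
    using cube_root_tradeoff[of "real n" c] c n by (simp_all add: h_def M_def)
  have "M \<le> R"
  proof (cases "1 / real n \<le> C")
    case True
    then show ?thesis
      by (simp add: M_def R_def c_def)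
  next
    case False
    then have "M = real n powr (1/3) / real n powr (2/3)"
      using n by (simp add: M_def c_def powr_divide)
    also have "\<dots> \<le> 1"
      using n by (simp add: powr_mono)
    finally show ?thesis
      by (simp add: R_def)
  qed
  have "0 \<le> L" "1 \<le> R"
    using adaptive_bound_nonneg[OF assms(1)] by (simp_all add: L_def R_def)
  have "C / h \<le> c / h"
    using c(3) \<open>0 < h\<close> by (simp add: divide_right_mono)
  then have "2 * L * (C / h) \<le> 2 * L * R"
    using \<open>c / h = M\<close> \<open>M \<le> R\<close> \<open>0 \<le> L\<close> by (intro mult_left_mono) auto
  moreover have "2 * L \<le> 2 * L * R"
    using \<open>0 \<le> L\<close> \<open>1 \<le> R\<close> by (simp add: mult_le_cancel_left1)
  moreover have "(\<Sum>t = 1..n. (y t - flh_ogd G B x0 y t)\<^sup>2 - (y t - w t)\<^sup>2) \<le> 2 * L + real n * h\<^sup>2 + 2 * L * C / h"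
    unfolding L_def using assms \<open>0 < h\<close> \<open>h \<le> 1\<close> by (intro flh_ogd_regret_le_resolution) auto
  ultimately show ?thesis
    using \<open>n * h\<^sup>2 = M\<close> \<open>M \<le> R\<close> unfolding L_def R_def by (simp add: algebra_simps)
qed

lemma flh_ogd_tv_regret:
  assumes "3 \<le> n" "\<forall>t\<in>{1..n}. \<bar>y t\<bar> \<le> G" "1 \<le> B" "\<bar>x0\<bar> \<le> B" "w \<in> TV B n C"
  shows "(\<Sum>t = 1..n. (y t - flh_ogd G B x0 y t)\<^sup>2 - (y t - w t)\<^sup>2)
           \<le> (1 + 24 * (G + B)\<^sup>2) * ln (real n) * max (real n powr (1/3) * C powr (2/3)) 1"
proof -
  define R where "R = max (real n powr (1/3) * C powr (2/3)) 1"
  define L where "L = adaptive_bound G B n"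
  have "0 \<le> ln (real n + 1)" "0 \<le> ln (real n)"
    using assms(1) by simp_all
  then have "(G + B)\<^sup>2 \<le> L"
    unfolding L_def adaptive_bound_def by (simp add: mult_le_cancel_left1)
  then have GB: "(G + B)\<^sup>2 \<le> 1 + 4 * L" "0 \<le> 1 + 4 * L"
    using zero_le_power2[of "G + B"] by linarith+
  have "(\<Sum>t = 1..n. (y t - flh_ogd G B x0 y t)\<^sup>2 - (y t - w t)\<^sup>2) \<le> (1 + 4 * L) * R"
  proof (cases "C < real n")
    case True
    then show ?thesis
      unfolding L_def R_def using assms by (intro flh_ogd_regret_le_tuned_resolution) auto
  next
    case False
    have "real n = real n powr (1/3) * real n powr (2/3)"
      using assms(1) by (simp flip: powr_add)
    also have "\<dots> \<le> real n powr (1/3) * C powr (2/3)"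
      using False by (intro mult_left_mono powr_mono2) auto
    also have "\<dots> \<le> R"
      by (simp add: R_def)
    finally have "(G + B)\<^sup>2 * real n \<le> (1 + 4 * L) * R"
      using GB by (intro mult_mono) auto
    then show ?thesis
      using flh_ogd_regret_le_trivial[of n y G x0 B w] assms by simp
  qed
  also have "\<dots> \<le> (1 + 24 * (G + B)\<^sup>2) * ln (real n) * R"
  proof (rule mult_right_mono)
    show "1 + 4 * L \<le> (1 + 24 * (G + B)\<^sup>2) * ln (real n)"
      using one_le_ln_nat[OF assms(1)] adaptive_bound_le_ln[OF assms(1), of G B]
      unfolding L_def by (simp add: algebra_simps)
  qed (simp add: R_def)
  finally show ?thesis
    by (simp add: R_def)
qed

theorem theorem1:
  shows "\<exists>p::real. p \<ge> 0 \<and>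
    (\<forall>B G :: real. 1 \<le> B \<and> B \<le> G \<longrightarrow>
      (\<exists>c::real. c > 0 \<and>
        (\<forall>(n::nat) (x0::real) (y::nat \<Rightarrow> real) (C::real) (w::nat \<Rightarrow> real).
           n \<ge> 3 \<and> x0 \<in> {-B..B} \<and> (\<forall>t\<in>{1..n}. \<bar>y t\<bar> \<le> G) \<and> C \<ge> 0 \<and> w \<in> TV B n C
           \<longrightarrow> (\<Sum>t = 1..n. (y t - flh_ogd G B x0 y t)\<^sup>2 - (y t - w t)\<^sup>2)
                 \<le> c * ln (real n) powr p * max (real n powr (1/3) * C powr (2/3)) 1)))"
proof (rule exI[of _ 1], intro conjI allI impI)
  fix B G :: real
  assume "1 \<le> B \<and> B \<le> G"
  show "\<exists>c>0. \<forall>n x0 y C w. 3 \<le> n \<and> x0 \<in> {- B..B} \<and> (\<forall>t\<in>{1..n}. \<bar>y t\<bar> \<le> G) \<and> 0 \<le> C \<and> w \<in> TV B n C \<longrightarrow>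
      (\<Sum>t = 1..n. (y t - flh_ogd G B x0 y t)\<^sup>2 - (y t - w t)\<^sup>2)
        \<le> c * ln (real n) powr 1 * max (real n powr (1 / 3) * C powr (2 / 3)) 1"
  proof (rule exI[of _ "1 + 24 * (G + B)\<^sup>2"], intro conjI allI impI)
    fix n x0 y C w
    assume "3 \<le> n \<and> x0 \<in> {- B..B} \<and> (\<forall>t\<in>{1..n}. \<bar>y t\<bar> \<le> G) \<and> 0 \<le> C \<and> w \<in> TV B n C"
    then show "(\<Sum>t = 1..n. (y t - flh_ogd G B x0 y t)\<^sup>2 - (y t - w t)\<^sup>2)
        \<le> (1 + 24 * (G + B)\<^sup>2) * ln (real n) powr 1 * max (real n powr (1 / 3) * C powr (2 / 3)) 1"
      using \<open>1 \<le> B \<and> B \<le> G\<close> one_le_ln_nat[of n] flh_ogd_tv_regret[of n y G B x0 w C] by auto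
  qed (simp add: add_pos_nonneg)
qed simp

end
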